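(* Let $(\mathbf{X},Y,\hat Y)$ be random variables on $\mathcal{X}\times\mathcal{Y}\times\mathcal{Y}$ with $P(\hat Y=i\mid Y=j)=p_{i,j}$ for all $i,j\in\{1,\dots,K\}$ (so $\sum_{i=1}^K p_{i,j}=1$ for each $j$), and assume $\hat Y$ is conditionally independent of $\mathbf{X}$ given $Y$ (i.e. $P(\mathbf{X}\mid Y)=P(\mathbf{X}\mid Y,\hat Y)$), so that $P(\hat Y=i\mid\mathbf{X})=\sum_{j=1}^K p_{i,j}P(Y=j\mid\mathbf{X})$. Let $Q$ be any probability distribution on a hypothesis class $\mathcal{H}$ and let $\hat M$ be a random variable such that, conditionally on $\mathbf{X}=\mathbf{x}$, $\hat M$ is discrete and equals $M_Q(\mathbf{x},i)$ with probability $P(\hat Y=i\mid\mathbf{X}=\mathbf{x})$, $i=1,\dots,K$. Let $\mu^{\hat M}_1=\mathbb{E}[\hat M]$, $\mu^{\hat M}_2=\mathbb{E}[\hat M^2]$, and $\gamma=\sum_{j=1}^K\max_{i\in\{1,\dots,K\}}p_{i,j}$. If $\mu^{\hat M}_1>0$, then $$R(B_{Q_{\mathrm{opt}}})\le 1-\frac{1}{\gamma}\cdot\frac{(\mu^{\hat M}_1)^2}{\mu^{\hat M}_2}.$$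
   Context: $\mathcal{X}\subset\mathbb{R}^d$, $\mathcal{Y}=\{1,\dots,K\}$, $K\ge2$; $\mathcal{H}$ is a class of classifiers $h:\mathcal{X}\to\mathcal{Y}$. For a distribution $Q$ on $\mathcal{H}$: votes $v_Q(\mathbf{x},c)=\mathbb{E}_{h\sim Q}\mathbb{1}[h(\mathbf{x})=c]$, margin $M_Q(\mathbf{x},y)=v_Q(\mathbf{x},y)-\max_{c\ne y}v_Q(\mathbf{x},c)$. $B_{Q_{\mathrm{opt}}}$ denotes the optimal (maximum a posteriori) classifier $B_{Q_{\mathrm{opt}}}(\mathbf{x})=\arg\max_{c\in\mathcal{Y}}P(Y=c\mid\mathbf{X}=\mathbf{x})$, whose risk with respect to the true label is $R(B_{Q_{\mathrm{opt}}})=\mathbb{E}_{\mathbf{X}}\big[1-\max_{j}P(Y=j\mid\mathbf{X})\big]$. $\hat Y$ is an imperfect (noisy) version of the label $Y$. *)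

theory Defs
  imports "HOL-Probability.Probability"
begin

definition vote :: "('x \<Rightarrow> nat) measure \<Rightarrow> 'x \<Rightarrow> nat \<Rightarrow> real" where
  "vote Q x c = measure Q {h \<in> space Q. h x = c}"

definition margin :: "nat \<Rightarrow> ('x \<Rightarrow> nat) measure \<Rightarrow> 'x \<Rightarrow> nat \<Rightarrow> real" where
  "margin K Q x y = vote Q x y - Max ((\<lambda>c. vote Q x c) ` ({1..K} - {y}))"

definition noise_gamma :: "nat \<Rightarrow> (nat \<Rightarrow> nat \<Rightarrow> real) \<Rightarrow> real" where
  "noise_gamma K p = (\<Sum>j=1..K. Max ((\<lambda>i. p i j) ` {1..K}))"

text \<open>Risk of the Bayes (MAP) classifier: E_X[1 - max_j P(Y=j|X)], where eta x j is
  (a version of) the conditional probability P(Y=j | X=x).\<close>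
definition bayes_risk :: "'o measure \<Rightarrow> ('o \<Rightarrow> 'x) \<Rightarrow> nat \<Rightarrow> ('x \<Rightarrow> nat \<Rightarrow> real) \<Rightarrow> real" where
  "bayes_risk M X K eta = (\<integral>\<omega>. 1 - Max ((\<lambda>j. eta (X \<omega>) j) ` {1..K}) \<partial>M)"

end

theory Submission
  imports Defs
begin

text \<open>Cauchy-Schwarz on the event Mhat > 0 gives P(Mhat > 0) \<ge> mu1^2 / mu2. Since Mhat has the
  conditional law of the margin at the noisy label, this is the probability that X lies in the
  strict majority-vote region A_i of its noisy label i. Conditional independence gives
  P(X \<in> A_i, Yhat = i, Y = j) = p_ij E[1_{A_i}(X) eta_j(X)], and as the regions are disjoint,
  summing over i and j bounds the probability by gamma E[max_j eta_j(X)] = gamma (1 - R(B_Qopt)).\<close>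

lemma square_le_of_quadratic_nonneg:
  fixes a b q :: real
  assumes q: "0 \<le> q" and quadratic: "\<And>c. 0 \<le> b - 2 * c * a + c\<^sup>2 * q"
  shows "a\<^sup>2 \<le> b * q"
proof (cases "q = 0")
  case True
  have "0 \<le> b - 2 * ((b + 1) / (2 * a)) * a"
    using quadratic[of "(b + 1) / (2 * a)"] True by simp
  then show ?thesis using True by (cases "a = 0") auto
next
  case False
  then have "0 < q" using q by simp
  have "0 \<le> b - 2 * (a / q) * a + (a / q)\<^sup>2 * q" by (rule quadratic)
  also have "\<dots> = b - a\<^sup>2 / q" using \<open>0 < q\<close> by (simp add: power2_eq_square field_simps)
  finally show ?thesis using \<open>0 < q\<close> by (simp add: field_simps)
qed

lemma inverse_mult_divide_le_of_square_le:
  fixes m\<^sub>1 m\<^sub>2 q \<gamma> e :: real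
  assumes "0 < m\<^sub>1" "0 \<le> m\<^sub>2" "m\<^sub>1\<^sup>2 \<le> m\<^sub>2 * q" "q \<le> \<gamma> * e" "0 \<le> e"
  shows "1 / \<gamma> * (m\<^sub>1\<^sup>2 / m\<^sub>2) \<le> e"
proof -
  have "m\<^sub>1\<^sup>2 \<le> m\<^sub>2 * (\<gamma> * e)" using assms(2-4) mult_left_mono by (blast intro: order_trans)
  moreover have "0 < m\<^sub>1\<^sup>2" using assms(1) by simp
  ultimately have "0 < m\<^sub>2 * (\<gamma> * e)" by linarith
  then have "0 < m\<^sub>2" "0 < \<gamma>" using assms(2,5) by (auto simp: zero_less_mult_iff)
  with \<open>m\<^sub>1\<^sup>2 \<le> m\<^sub>2 * (\<gamma> * e)\<close> show ?thesis by (simp add: field_simps mult_ac)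
qed

lemma (in prob_space) expectation_squared_le_prob_pos:
  fixes f :: "'a \<Rightarrow> real"
  assumes f [measurable]: "f \<in> borel_measurable M"
    and f2: "integrable M (\<lambda>x. (f x)\<^sup>2)"
    and mean: "0 \<le> expectation f"
  shows "(expectation f)\<^sup>2 \<le> expectation (\<lambda>x. (f x)\<^sup>2) * prob {x \<in> space M. 0 < f x}"
proof -
  define S where "S = {x \<in> space M. 0 < f x}"
  have S [measurable]: "S \<in> events" unfolding S_def by measurable
  have f1: "integrable M f" using f f2 by (rule square_integrable_imp_integrable)
  have fS: "integrable M (\<lambda>x. f x * indicator S x)"
    using f1 by (rule integrable_real_mult_indicator[OF S])
  have f2S: "integrable M (\<lambda>x. (f x)\<^sup>2 * indicator S x)"
    using f2 by (rule integrable_real_mult_indicator[OF S])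
  have indS: "integrable M (indicator S :: 'a \<Rightarrow> real)"
    by (simp add: emeasure_eq_measure)
  define a where "a = expectation (\<lambda>x. f x * indicator S x)"
  define b where "b = expectation (\<lambda>x. (f x)\<^sup>2 * indicator S x)"
  have mean_le: "expectation f \<le> a" unfolding a_def
    by (rule integral_mono[OF f1 fS]) (auto simp: S_def indicator_def)
  have b_le: "b \<le> expectation (\<lambda>x. (f x)\<^sup>2)" unfolding b_def
    by (rule integral_mono[OF f2S f2]) (auto simp: indicator_def)
  have "0 \<le> b - 2 * c * a + c\<^sup>2 * prob S" for c
  proof -
    have "(\<lambda>x. (f x - c)\<^sup>2 * indicator S x) =
        (\<lambda>x. ((f x)\<^sup>2 * indicator S x - (2 * c) * (f x * indicator S x)) + c\<^sup>2 * indicator S x)"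
      by (auto simp: power2_eq_square algebra_simps)
    then have "expectation (\<lambda>x. (f x - c)\<^sup>2 * indicator S x) = b - 2 * c * a + c\<^sup>2 * prob S"
      using fS f2S indS by (simp add: a_def b_def)
    moreover have "0 \<le> expectation (\<lambda>x. (f x - c)\<^sup>2 * indicator S x)" by simp
    ultimately show ?thesis by simp
  qed
  then have "a\<^sup>2 \<le> b * prob S" by (intro square_le_of_quadratic_nonneg) simp_all
  moreover have "(expectation f)\<^sup>2 \<le> a\<^sup>2" using mean mean_le by (simp add: power_mono)
  moreover have "b * prob S \<le> expectation (\<lambda>x. (f x)\<^sup>2) * prob S"
    using b_le by (simp add: mult_right_mono)
  ultimately show ?thesis unfolding S_def by linarith
qed

definition vote_winner :: "nat \<Rightarrow> ('x \<Rightarrow> nat) measure \<Rightarrow> nat \<Rightarrow> 'x set" where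
  "vote_winner K Q i = {x. \<forall>c\<in>{1..K} - {i}. vote Q x c < vote Q x i}"

lemma margin_pos_iff_vote_winner:
  assumes "2 \<le> K"
  shows "0 < margin K Q x i \<longleftrightarrow> x \<in> vote_winner K Q i"
proof -
  have "(if i = 1 then 2 else 1) \<in> {1..K} - {i}" using assms by auto
  then have "{1..K} - {i} \<noteq> {}" by blast
  then show ?thesis
    unfolding margin_def vote_winner_def by (simp add: Max_less_iff)
qed

lemma disjoint_family_vote_winner: "disjoint_family_on (vote_winner K Q) {1..K}"
proof (unfold disjoint_family_on_def, intro ballI impI)
  fix i k assume "i \<in> {1..K}" "k \<in> {1..K}" "i \<noteq> k"
  then have "vote Q x k < vote Q x i \<Longrightarrow> vote Q x i < vote Q x k \<Longrightarrow> False" for x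
    by simp
  with \<open>i \<in> {1..K}\<close> \<open>k \<in> {1..K}\<close> \<open>i \<noteq> k\<close>
  show "vote_winner K Q i \<inter> vote_winner K Q k = {}"
    unfolding vote_winner_def by blast
qed

lemma vote_winner_borel:
  assumes "\<And>c. (\<lambda>x. vote Q x c) \<in> borel_measurable borel"
  shows "vote_winner K Q i \<in> sets borel"
  unfolding vote_winner_def using assms by measurable

lemma sum_indicator_le_Max_of_disjoint:
  fixes w :: "'i \<Rightarrow> real"
  assumes "finite I" "I \<noteq> {}" and nonneg: "\<And>i. i \<in> I \<Longrightarrow> 0 \<le> w i"
    and disj: "disjoint_family_on A I"
  shows "(\<Sum>i\<in>I. w i * indicator (A i) x) \<le> Max (w ` I)"
proof (cases "\<exists>i\<in>I. x \<in> A i")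
  case True
  then obtain k where k: "k \<in> I" "x \<in> A k" by blast
  have "x \<notin> A i" if "i \<in> I" "i \<noteq> k" for i
    using disj that k unfolding disjoint_family_on_def by blast
  then have "(\<Sum>i\<in>I. w i * indicator (A i) x) = w k"
    using k \<open>finite I\<close> by (subst sum.remove[OF _ k(1)]) (auto intro!: sum.neutral)
  also have "\<dots> \<le> Max (w ` I)" using k \<open>finite I\<close> by simp
  finally show ?thesis .
next
  case False
  then have "(\<Sum>i\<in>I. w i * indicator (A i) x) = 0" by (intro sum.neutral) auto
  also have "\<dots> \<le> Max (w ` I)"
    using assms(1,2) nonneg by (subst Max_ge_iff) auto
  finally show ?thesis .
qed

lemma sum_mult_le_Max_mult_sum:
  fixes a b :: "'j \<Rightarrow> real"
  assumes "finite J" and "\<And>j. j \<in> J \<Longrightarrow> 0 \<le> b j"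
  shows "(\<Sum>j\<in>J. a j * b j) \<le> Max (a ` J) * (\<Sum>j\<in>J. b j)"
  unfolding sum_distrib_left using assms by (intro sum_mono mult_right_mono) auto

locale noisy_label_model = prob_space M
  for M :: "'o measure" and X :: "'o \<Rightarrow> 'x::topological_space" and Y Yhat :: "'o \<Rightarrow> nat"
    and K :: nat and p :: "nat \<Rightarrow> nat \<Rightarrow> real" and eta :: "'x \<Rightarrow> nat \<Rightarrow> real" +
  assumes X_measurable [measurable]: "X \<in> borel_measurable M"
    and Y_measurable [measurable]: "Y \<in> M \<rightarrow>\<^sub>M count_space UNIV"
    and Yhat_measurable [measurable]: "Yhat \<in> M \<rightarrow>\<^sub>M count_space UNIV"
    and Y_range: "\<And>\<omega>. \<omega> \<in> space M \<Longrightarrow> Y \<omega> \<in> {1..K}"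
    and Yhat_range: "\<And>\<omega>. \<omega> \<in> space M \<Longrightarrow> Yhat \<omega> \<in> {1..K}"
    and p_nonneg: "\<And>i j. i \<in> {1..K} \<Longrightarrow> j \<in> {1..K} \<Longrightarrow> 0 \<le> p i j"
    and noise: "\<And>i j. i \<in> {1..K} \<Longrightarrow> j \<in> {1..K} \<Longrightarrow>
      prob {\<omega> \<in> space M. Yhat \<omega> = i \<and> Y \<omega> = j} = p i j * prob {\<omega> \<in> space M. Y \<omega> = j}"
    and cond_indep: "\<And>A i j. A \<in> sets borel \<Longrightarrow> i \<in> {1..K} \<Longrightarrow> j \<in> {1..K} \<Longrightarrow>
      prob {\<omega> \<in> space M. X \<omega> \<in> A \<and> Yhat \<omega> = i \<and> Y \<omega> = j} * prob {\<omega> \<in> space M. Y \<omega> = j}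
      = prob {\<omega> \<in> space M. X \<omega> \<in> A \<and> Y \<omega> = j} * prob {\<omega> \<in> space M. Yhat \<omega> = i \<and> Y \<omega> = j}"
    and eta_measurable [measurable]: "\<And>j. (\<lambda>x. eta x j) \<in> borel_measurable borel"
    and eta_nonneg: "\<And>x j. 0 \<le> eta x j"
    and eta_sum: "\<And>x. (\<Sum>j=1..K. eta x j) = 1"
    and eta_cond: "\<And>A j. A \<in> sets borel \<Longrightarrow> j \<in> {1..K} \<Longrightarrow>
      prob {\<omega> \<in> space M. X \<omega> \<in> A \<and> Y \<omega> = j} = expectation (\<lambda>\<omega>. indicator A (X \<omega>) * eta (X \<omega>) j)"
begin

abbreviation max_posterior :: "'x \<Rightarrow> real" where
  "max_posterior x \<equiv> Max ((\<lambda>j. eta x j) ` {1..K})"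

lemma eta_le_one: "j \<in> {1..K} \<Longrightarrow> eta x j \<le> 1"
  using member_le_sum[of j "{1..K}" "eta x"] eta_nonneg eta_sum[of x] by simp

lemma labels_nonempty: "{1..K} \<noteq> {}"
  using eta_sum[of undefined] by (cases "K = 0") auto

lemma max_posterior_bounds: "0 \<le> max_posterior x" "max_posterior x \<le> 1"
  using labels_nonempty eta_nonneg eta_le_one by (auto simp: Max_ge_iff)

lemma integrable_max_posterior: "integrable M (\<lambda>\<omega>. max_posterior (X \<omega>))"
  using max_posterior_bounds by (intro integrable_const_bound[where B=1]) auto

lemma bayes_risk_eq: "bayes_risk M X K eta = 1 - expectation (\<lambda>\<omega>. max_posterior (X \<omega>))"
  unfolding bayes_risk_def using integrable_max_posterior by (simp add: prob_space)

lemma integrable_indicator_eta: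
  "j \<in> {1..K} \<Longrightarrow> A \<in> sets borel \<Longrightarrow> integrable M (\<lambda>\<omega>. indicator A (X \<omega>) * eta (X \<omega>) j)"
  using eta_le_one eta_nonneg
  by (intro integrable_const_bound[where B=1]) (auto simp: indicator_def)

lemma prob_region_label_noise:
  assumes A: "A \<in> sets borel" and i: "i \<in> {1..K}" and j: "j \<in> {1..K}"
  shows "prob {\<omega> \<in> space M. X \<omega> \<in> A \<and> Yhat \<omega> = i \<and> Y \<omega> = j}
    = p i j * expectation (\<lambda>\<omega>. indicator A (X \<omega>) * eta (X \<omega>) j)"
proof -
  define a where "a = prob {\<omega> \<in> space M. X \<omega> \<in> A \<and> Yhat \<omega> = i \<and> Y \<omega> = j}"
  define b where "b = prob {\<omega> \<in> space M. X \<omega> \<in> A \<and> Y \<omega> = j}"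
  define y where "y = prob {\<omega> \<in> space M. Y \<omega> = j}"
  have "a * y = b * (p i j * y)"
    using cond_indep[OF A i j] noise[OF i j] unfolding a_def b_def y_def by simp
  moreover have "a \<le> y" "b \<le> y"
    unfolding a_def b_def y_def using A by (auto intro!: finite_measure_mono)
  moreover have "0 \<le> a" "0 \<le> b" unfolding a_def b_def by simp_all
  \<comment> \<open>cancel \<open>y = P(Y = j)\<close>; if it vanishes, so do \<open>a\<close> and \<open>b\<close>\<close>
  ultimately have "a = p i j * b"
    by (cases "y = 0") auto
  then show ?thesis using eta_cond[OF A j] unfolding a_def b_def by simp
qed

lemma prob_region_eq_expectation:
  assumes A: "\<And>i. A i \<in> sets borel" and disj: "disjoint_family_on A {1..K}"
  shows "prob {\<omega> \<in> space M. X \<omega> \<in> A (Yhat \<omega>)}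
    = expectation (\<lambda>\<omega>. \<Sum>j\<in>{1..K}. eta (X \<omega>) j * (\<Sum>i\<in>{1..K}. p i j * indicator (A i) (X \<omega>)))"
proof -
  define C where "C i j = {\<omega> \<in> space M. X \<omega> \<in> A i \<and> Yhat \<omega> = i \<and> Y \<omega> = j}" for i j
  have C_events: "C i j \<in> events" for i j
    unfolding C_def using A[of i] by measurable
  have "{\<omega> \<in> space M. X \<omega> \<in> A (Yhat \<omega>)} = (\<Union>i\<in>{1..K}. \<Union>j\<in>{1..K}. C i j)"
    using Y_range Yhat_range unfolding C_def by auto
  then have "prob {\<omega> \<in> space M. X \<omega> \<in> A (Yhat \<omega>)} = (\<Sum>i\<in>{1..K}. prob (\<Union>j\<in>{1..K}. C i j))"
    using disj C_events
    by (auto intro!: finite_measure_finite_Union simp: disjoint_family_on_def C_def)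
  also have "\<dots> = (\<Sum>i\<in>{1..K}. \<Sum>j\<in>{1..K}. prob (C i j))"
    using C_events
    by (auto intro!: sum.cong finite_measure_finite_Union simp: disjoint_family_on_def C_def)
  also have "\<dots> = (\<Sum>i\<in>{1..K}. \<Sum>j\<in>{1..K}. p i j * expectation (\<lambda>\<omega>. indicator (A i) (X \<omega>) * eta (X \<omega>) j))"
    unfolding C_def using A by (intro sum.cong refl prob_region_label_noise) auto
  also have "\<dots> = (\<Sum>i\<in>{1..K}. expectation (\<lambda>\<omega>. \<Sum>j\<in>{1..K}. p i j * (indicator (A i) (X \<omega>) * eta (X \<omega>) j)))"
    using A integrable_indicator_eta by (intro sum.cong refl) (simp add: Bochner_Integration.integral_sum)
  also have "\<dots> = expectation (\<lambda>\<omega>. \<Sum>i\<in>{1..K}. \<Sum>j\<in>{1..K}. p i j * (indicator (A i) (X \<omega>) * eta (X \<omega>) j))"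
    using A integrable_indicator_eta by (intro Bochner_Integration.integral_sum[symmetric]) auto
  also have "\<dots> = expectation (\<lambda>\<omega>. \<Sum>j\<in>{1..K}. eta (X \<omega>) j * (\<Sum>i\<in>{1..K}. p i j * indicator (A i) (X \<omega>)))"
    by (subst sum.swap) (simp only: sum_distrib_left mult_ac)
  finally show ?thesis .
qed

lemma prob_region_le_noise_gamma:
  assumes A: "\<And>i. A i \<in> sets borel" and disj: "disjoint_family_on A {1..K}"
  shows "prob {\<omega> \<in> space M. X \<omega> \<in> A (Yhat \<omega>)}
    \<le> noise_gamma K p * expectation (\<lambda>\<omega>. max_posterior (X \<omega>))"
proof -
  have max_p_nonneg: "0 \<le> Max ((\<lambda>i. p i j) ` {1..K})" if "j \<in> {1..K}" for j
    using labels_nonempty p_nonneg that by (auto simp: Max_ge_iff)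
  have pointwise: "(\<Sum>j\<in>{1..K}. eta x j * (\<Sum>i\<in>{1..K}. p i j * indicator (A i) x))
      \<le> noise_gamma K p * max_posterior x" for x
  proof -
    have "(\<Sum>j\<in>{1..K}. eta x j * (\<Sum>i\<in>{1..K}. p i j * indicator (A i) x))
        \<le> (\<Sum>j\<in>{1..K}. eta x j * Max ((\<lambda>i. p i j) ` {1..K}))"
      using labels_nonempty p_nonneg disj eta_nonneg
      by (intro sum_mono mult_left_mono sum_indicator_le_Max_of_disjoint) auto
    also have "\<dots> \<le> max_posterior x * noise_gamma K p"
      unfolding noise_gamma_def using max_p_nonneg by (intro sum_mult_le_Max_mult_sum) auto
    finally show ?thesis by (simp add: mult.commute)
  qed
  have "integrable M (\<lambda>\<omega>. \<Sum>j\<in>{1..K}. \<Sum>i\<in>{1..K}. p i j * (indicator (A i) (X \<omega>) * eta (X \<omega>) j))"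
    using A integrable_indicator_eta
    by (intro Bochner_Integration.integrable_sum Bochner_Integration.integrable_mult_right) auto
  then have "integrable M (\<lambda>\<omega>. \<Sum>j\<in>{1..K}. eta (X \<omega>) j * (\<Sum>i\<in>{1..K}. p i j * indicator (A i) (X \<omega>)))"
    by (simp only: sum_distrib_left mult_ac)
  then have "expectation (\<lambda>\<omega>. \<Sum>j\<in>{1..K}. eta (X \<omega>) j * (\<Sum>i\<in>{1..K}. p i j * indicator (A i) (X \<omega>)))
      \<le> expectation (\<lambda>\<omega>. noise_gamma K p * max_posterior (X \<omega>))"
    using integrable_max_posterior pointwise by (intro integral_mono) auto
  then show ?thesis unfolding prob_region_eq_expectation[OF A disj] by simp
qed

end

theorem theorem2:
  fixes M :: "'o measure"
    and X :: "'o \<Rightarrow> real ^ 'd" and Y Yhat :: "'o \<Rightarrow> nat" and Mhat :: "'o \<Rightarrow> real"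
    and K :: nat and p :: "nat \<Rightarrow> nat \<Rightarrow> real" and eta :: "real ^ 'd \<Rightarrow> nat \<Rightarrow> real"
    and XX :: "(real ^ 'd) set" and H :: "(real ^ 'd \<Rightarrow> nat) set"
    and Q :: "(real ^ 'd \<Rightarrow> nat) measure"
  assumes M: "prob_space M"
    and K: "K \<ge> 2"
    and X: "X \<in> borel_measurable M" "\<forall>\<omega>\<in>space M. X \<omega> \<in> XX"
    and Y: "Y \<in> M \<rightarrow>\<^sub>M count_space UNIV" "\<forall>\<omega>\<in>space M. Y \<omega> \<in> {1..K}"
    and Yhat: "Yhat \<in> M \<rightarrow>\<^sub>M count_space UNIV" "\<forall>\<omega>\<in>space M. Yhat \<omega> \<in> {1..K}"
    and H: "\<forall>h\<in>H. \<forall>x\<in>XX. h x \<in> {1..K}"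
    and Q: "prob_space Q" "space Q \<subseteq> H"
           "\<forall>x\<in>XX. \<forall>c. {h \<in> space Q. h x = c} \<in> sets Q"
    and vote_meas: "\<forall>c. (\<lambda>x. vote Q x c) \<in> borel_measurable borel"
    and p_nonneg: "\<forall>i\<in>{1..K}. \<forall>j\<in>{1..K}. p i j \<ge> 0"
    and p_sum: "\<forall>j\<in>{1..K}. (\<Sum>i=1..K. p i j) = 1"
    and noise: "\<forall>i\<in>{1..K}. \<forall>j\<in>{1..K}.
        measure M {\<omega> \<in> space M. Yhat \<omega> = i \<and> Y \<omega> = j} = p i j * measure M {\<omega> \<in> space M. Y \<omega> = j}"
    and cond_indep: "\<forall>A\<in>sets borel. \<forall>i\<in>{1..K}. \<forall>j\<in>{1..K}.
        measure M {\<omega> \<in> space M. X \<omega> \<in> A \<and> Yhat \<omega> = i \<and> Y \<omega> = j} * measure M {\<omega> \<in> space M. Y \<omega> = j}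
        = measure M {\<omega> \<in> space M. X \<omega> \<in> A \<and> Y \<omega> = j} * measure M {\<omega> \<in> space M. Yhat \<omega> = i \<and> Y \<omega> = j}"
    and eta_meas: "\<forall>j. (\<lambda>x. eta x j) \<in> borel_measurable borel"
    and eta_nonneg: "\<forall>x j. eta x j \<ge> 0"
    and eta_sum: "\<forall>x. (\<Sum>j=1..K. eta x j) = 1"
    and eta_cond: "\<forall>A\<in>sets borel. \<forall>j\<in>{1..K}.
        measure M {\<omega> \<in> space M. X \<omega> \<in> A \<and> Y \<omega> = j} = (\<integral>\<omega>. indicator A (X \<omega>) * eta (X \<omega>) j \<partial>M)"
    and Mhat: "Mhat \<in> borel_measurable M"
    and Mhat_law: "\<forall>A\<in>sets borel. \<forall>B\<in>sets (borel :: real measure).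
        measure M {\<omega> \<in> space M. X \<omega> \<in> A \<and> Mhat \<omega> \<in> B}
        = measure M {\<omega> \<in> space M. X \<omega> \<in> A \<and> margin K Q (X \<omega>) (Yhat \<omega>) \<in> B}"
    and mu1_pos: "(\<integral>\<omega>. Mhat \<omega> \<partial>M) > 0"
  shows "bayes_risk M X K eta
           \<le> 1 - (1 / noise_gamma K p) * ((\<integral>\<omega>. Mhat \<omega> \<partial>M)\<^sup>2 / (\<integral>\<omega>. (Mhat \<omega>)\<^sup>2 \<partial>M))"
proof -
  interpret noisy_label_model M X Y Yhat K p eta
    using X(1) Y Yhat p_nonneg noise cond_indep eta_meas eta_nonneg eta_sum eta_cond
    by (intro noisy_label_model.intro[OF M] noisy_label_model_axioms.intro) auto
  define E where "E = expectation (\<lambda>\<omega>. max_posterior (X \<omega>))"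
  define \<gamma> where "\<gamma> = noise_gamma K p"
  have E_nonneg: "0 \<le> E" unfolding E_def using max_posterior_bounds by simp
  have "prob {\<omega> \<in> space M. 0 < Mhat \<omega>} = prob {\<omega> \<in> space M. X \<omega> \<in> vote_winner K Q (Yhat \<omega>)}"
    using Mhat_law[rule_format, of UNIV "{0<..}"] by (simp add: margin_pos_iff_vote_winner[OF K])
  also have "\<dots> \<le> \<gamma> * E" unfolding E_def \<gamma>_def
    using vote_meas by (intro prob_region_le_noise_gamma vote_winner_borel disjoint_family_vote_winner) auto
  finally have prob_pos: "prob {\<omega> \<in> space M. 0 < Mhat \<omega>} \<le> \<gamma> * E" .
  show ?thesis
  proof (cases "integrable M (\<lambda>\<omega>. (Mhat \<omega>)\<^sup>2)")
    case True
    then have "(expectation Mhat)\<^sup>2 \<le> expectation (\<lambda>\<omega>. (Mhat \<omega>)\<^sup>2) * prob {\<omega> \<in> space M. 0 < Mhat \<omega>}"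
      using Mhat mu1_pos by (intro expectation_squared_le_prob_pos) auto
    then have "1 / \<gamma> * ((expectation Mhat)\<^sup>2 / expectation (\<lambda>\<omega>. (Mhat \<omega>)\<^sup>2)) \<le> E"
      using mu1_pos prob_pos E_nonneg by (intro inverse_mult_divide_le_of_square_le) auto
    then show ?thesis unfolding bayes_risk_eq \<gamma>_def E_def by simp
  next
    case False
    \<comment> \<open>then the second moment is the junk value 0, and the bound reads \<open>R \<le> 1\<close>\<close>
    then show ?thesis using E_nonneg by (simp add: bayes_risk_eq E_def not_integrable_integral_eq)
  qed
qed

end
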